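(* Let $\alpha,\beta\in\mathbb{R}$ and let $m\ge 0$ be an integer. Let $b_0,\dots,b_m$ be the unique solution of the lower-triangular system $$\sum_{k=0}^{i}\frac{(-1)^{i-k}}{i-k+1}\,b_k=\frac{(-1)^{i+1}}{i+2}-\binom{-\alpha}{i+1},\qquad i=0,1,\dots,m,$$ and let $b'_0,\dots,b'_m$ be the unique solution of the same system with $\alpha$ replaced by $\beta$. Define $$c_i=\sum_{k=i}^{m}\binom{k}{i}(-1)^{k-i}\,b_k,\qquad d_i=\sum_{k=i}^{m}\binom{k}{i}(-1)^{k-i}\,b'_k,\qquad i=0,\dots,m.$$ Then for every integer $n\ge 0$, every $h>0$, and every real polynomial $f$ of degree at most $m$, $$\int_{-\alpha h}^{(n+\beta)h} f(t)\,dt \;=\; h\sum_{i=0}^{n} f(ih)\;+\;h\sum_{i=0}^{m} c_i\, f(ih)\;+\;h\sum_{i=0}^{m} d_i\, f\big((n-i)h\big).$$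
   Context: For real $x$ and integer $j\ge 0$, $\binom{x}{j}$ denotes the generalized binomial coefficient $x(x-1)\cdots(x-j+1)/j!$ (with $\binom{x}{0}=1$). The integral limits are oriented, so for negative $\alpha$ or $\beta$ the nodes $ih$ may lie outside the range of integration, and when $m>n$ some nodes $ih$ or $(n-i)h$ lie outside $[0,nh]$; the formula is to be read literally with the integrand evaluated at those points. In the system for $b_k$, the coefficient of $b_i$ in the $i$-th equation is $1$, so the system is uniquely solvable by forward substitution. *)

theory Defs
  imports "HOL-Analysis.Analysis" "HOL-Computational_Algebra.Polynomial"
begin

definition oriented_integral :: "real \<Rightarrow> real \<Rightarrow> (real \<Rightarrow> real) \<Rightarrow> real" where
  "oriented_integral a b f = (if a \<le> b then integral {a..b} f else - integral {b..a} f)"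

definition solves_system :: "real \<Rightarrow> nat \<Rightarrow> (nat \<Rightarrow> real) \<Rightarrow> bool" where
  "solves_system \<alpha> m b \<longleftrightarrow>
     (\<forall>i\<le>m. (\<Sum>k=0..i. (-1) ^ (i - k) / real (i - k + 1) * b k)
              = (-1) ^ (i + 1) / real (i + 2) - ((-\<alpha>) gchoose (i + 1)))"

end

theory Submission
  imports Defs
begin

text \<open>
  Let F be an antiderivative of f and \<Delta> the forward difference with step h. On polynomials
  \<Delta> is nilpotent and h D = log (1 + \<Delta>), so G_h = (log (1 + \<Delta>) / \<Delta>) F satisfies
  \<Delta> G_h = h f, and moreover G_h(x) = G_{-h}(x - h). Telescoping gives
  h (f(0) + ... + f(nh)) = G_{-h}(nh) - G_h(0). Newton's forward formula
  F(y - \<alpha> h) = \<Sum>_j (-\<alpha> choose j) \<Delta>^j F(y) turns the linear system for the b_k into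
  h \<Sum>_i c_i f(y + ih) = G_h(y) - F(y - \<alpha> h). Using this at y = 0 with step h, and at y = nh
  with step -h and \<beta> in place of \<alpha>, the three sums add up to F((n + \<beta>) h) - F(-\<alpha> h).
\<close>

lemma sum_binomial_Suc:
  fixes g :: "nat \<Rightarrow> 'a::comm_semiring_1"
  shows "(\<Sum>i\<le>Suc k. of_nat (Suc k choose i) * g i) = (\<Sum>i\<le>k. of_nat (k choose i) * (g i + g (Suc i)))"
proof -
  have "(\<Sum>i\<le>k. of_nat (k choose i) * g i) = (\<Sum>i\<le>Suc k. of_nat (k choose i) * g i)"
    by (simp add: binomial_eq_0)
  also have "\<dots> = g 0 + (\<Sum>i\<le>k. of_nat (k choose Suc i) * g (Suc i))"
    by (simp only: sum.atMost_Suc_shift) simp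
  finally show ?thesis
    by (simp only: sum.atMost_Suc_shift) (simp add: sum.distrib algebra_simps)
qed

lemma sum_triangle_swap:
  fixes g :: "nat \<Rightarrow> nat \<Rightarrow> 'a::comm_monoid_add"
  shows "(\<Sum>k\<le>m. \<Sum>i\<le>k. g k i) = (\<Sum>i\<le>m. \<Sum>k=i..m. g k i)"
  by (induction m) (simp_all add: sum.distrib)

lemma exists_antiderivative:
  fixes p :: "'a::field_char_0 poly"
  shows "\<exists>P. pderiv P = p \<and> degree P \<le> Suc (degree p)"
proof -
  define P where "P = (\<Sum>i\<le>degree p. monom (coeff p i / of_nat (Suc i)) (Suc i))"
  have "pderiv P = (\<Sum>i\<le>degree p. monom (coeff p i) i)"
    unfolding P_def higher_pderiv_sum[of 1, simplified]
    by (rule sum.cong) (simp_all add: pderiv_monom del: of_nat_Suc)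
  also have "\<dots> = p"
    by (rule poly_as_sum_of_monoms)
  finally show ?thesis
    unfolding P_def by (auto intro!: degree_sum_le order_trans[OF degree_monom_le])
qed

definition fwd_diff :: "'a::field_char_0 \<Rightarrow> 'a poly \<Rightarrow> 'a poly" where
  "fwd_diff h p = p \<circ>\<^sub>p [:h, 1:] - p"

lemma poly_fwd_diff [simp]: "poly (fwd_diff h p) x = poly p (x + h) - poly p x"
  by (simp add: fwd_diff_def poly_pcompose algebra_simps)

lemma fwd_diff_const [simp]: "fwd_diff h [:c:] = 0"
  by (simp add: fwd_diff_def)

lemma fwd_diff_pow_0 [simp]: "(fwd_diff h ^^ k) 0 = 0"
  by (induction k) (simp_all add: fwd_diff_def)

lemma fwd_diff_smult: "fwd_diff h (smult c p) = smult c (fwd_diff h p)"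
  by (simp add: fwd_diff_def pcompose_smult smult_diff_right)

lemma pderiv_fwd_diff_pow: "pderiv ((fwd_diff h ^^ k) p) = (fwd_diff h ^^ k) (pderiv p)"
  by (induction k) (simp_all add: fwd_diff_def pderiv_diff pderiv_pcompose pderiv_pCons)

lemma degree_fwd_diff: "degree (fwd_diff h p) \<le> degree p - 1"
proof (cases "degree p = 0")
  case True
  then obtain c where "p = [:c:]" by (rule degree_eq_zeroE)
  then show ?thesis by simp
next
  case False
  have "coeff (fwd_diff h p) i = 0" if "i \<ge> degree p" for i
  proof (cases "i = degree p")
    case True
    then show ?thesis
      using lead_coeff_comp[of "[:h, 1:]" p] by (simp add: fwd_diff_def degree_pcompose)
  next
    case False
    then show ?thesis
      using that by (simp add: fwd_diff_def coeff_eq_0 degree_pcompose)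
  qed
  then show ?thesis using False by (intro degree_le) auto
qed

lemma degree_fwd_diff_pow: "degree ((fwd_diff h ^^ k) p) \<le> degree p - k"
  by (induction k) (auto intro: order_trans[OF degree_fwd_diff])

lemma fwd_diff_pow_eq_0:
  assumes "degree p < k"
  shows "(fwd_diff h ^^ k) p = 0"
proof -
  obtain j where k: "k = Suc j"
    using assms by (cases k) auto
  then have "degree ((fwd_diff h ^^ j) p) = 0"
    using assms degree_fwd_diff_pow[where h=h and p=p and k=j] by linarith
  then obtain c where "(fwd_diff h ^^ j) p = [:c:]"
    by (rule degree_eq_zeroE)
  with k show ?thesis by simp
qed

lemma poly_fwd_diff_pow_pCons:
  "poly ((fwd_diff h ^^ Suc j) (pCons a q)) y
     = y * poly ((fwd_diff h ^^ Suc j) q) y + of_nat (Suc j) * h * poly ((fwd_diff h ^^ j) q) (y + h)"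
proof (induction j arbitrary: y)
  case 0
  then show ?case by (simp add: algebra_simps)
next
  case (Suc j)
  have "poly ((fwd_diff h ^^ Suc (Suc j)) (pCons a q)) y
      = poly ((fwd_diff h ^^ Suc j) (pCons a q)) (y + h) - poly ((fwd_diff h ^^ Suc j) (pCons a q)) y"
    by simp
  then show ?case
    by (simp only: Suc.IH) (simp add: algebra_simps)
qed

lemma newton_forward_difference:
  assumes "degree p \<le> N"
  shows "poly p (y + x * h) = (\<Sum>j\<le>N. (x gchoose j) * poly ((fwd_diff h ^^ j) p) y)"
  using assms
proof (induction p arbitrary: N x y rule: pCons_induct)
  case 0
  then show ?case by simp
next
  case (pCons a q)
  show ?case
  proof (cases N)
    case 0
    with pCons.prems have "q = 0" by (simp split: if_splits)
    with 0 show ?thesis by simp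
  next
    case (Suc M)
    with pCons.prems have deg_q: "degree q \<le> M" by (simp split: if_splits)
    have absorb: "(x gchoose Suc j) * (of_nat (Suc j) * h * r) = x * h * ((x - 1 gchoose j) * r)" for j r
      by (metis gbinomial_absorption mult.assoc mult.left_commute)
    have split: "(\<Sum>j\<le>N. (x gchoose j) * poly ((fwd_diff h ^^ j) r) z)
        = poly r z + (\<Sum>j\<le>M. (x gchoose Suc j) * poly ((fwd_diff h ^^ Suc j) r) z)" for r z
      unfolding Suc sum.atMost_Suc_shift[of _ M] by simp
    have "(\<Sum>j\<le>N. (x gchoose j) * poly ((fwd_diff h ^^ j) (pCons a q)) y)
        = a + y * (poly q y + (\<Sum>j\<le>M. (x gchoose Suc j) * poly ((fwd_diff h ^^ Suc j) q) y))
            + x * h * (\<Sum>j\<le>M. (x - 1 gchoose j) * poly ((fwd_diff h ^^ j) q) (y + h))"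
      unfolding split poly_fwd_diff_pow_pCons distrib_left absorb sum.distrib
      by (simp add: sum_distrib_left algebra_simps del: funpow.simps)
    also have "\<dots> = a + y * poly q (y + x * h) + x * h * poly q (y + h + (x - 1) * h)"
    proof -
      have "poly q (y + x * h) = (\<Sum>j\<le>N. (x gchoose j) * poly ((fwd_diff h ^^ j) q) y)"
        by (rule pCons.IH) (use deg_q Suc in simp)
      moreover have "poly q (y + h + (x - 1) * h)
          = (\<Sum>j\<le>M. (x - 1 gchoose j) * poly ((fwd_diff h ^^ j) q) (y + h))"
        by (rule pCons.IH[OF deg_q])
      ultimately show ?thesis by (simp only: split)
    qed
    finally show ?thesis by (simp add: algebra_simps)
  qed
qed

lemma poly_fwd_diff_pow_binomial:
  "poly ((fwd_diff h ^^ k) p) x = (\<Sum>i\<le>k. of_nat (k choose i) * (-1) ^ (k - i) * poly p (x + of_nat i * h))"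
proof (induction k arbitrary: x)
  case 0
  then show ?case by simp
next
  case (Suc k)
  have "(\<Sum>i\<le>Suc k. of_nat (Suc k choose i) * ((-1) ^ (Suc k - i) * poly p (x + of_nat i * h)))
      = (\<Sum>i\<le>k. of_nat (k choose i) * ((-1) ^ (Suc k - i) * poly p (x + of_nat i * h)
                                        + (-1) ^ (Suc k - Suc i) * poly p (x + of_nat (Suc i) * h)))"
    by (rule sum_binomial_Suc)
  also have "\<dots> = (\<Sum>i\<le>k. of_nat (k choose i) * (-1) ^ (k - i) * poly p (x + h + of_nat i * h))
                 - (\<Sum>i\<le>k. of_nat (k choose i) * (-1) ^ (k - i) * poly p (x + of_nat i * h))"
    unfolding sum_subtractf[symmetric] by (rule sum.cong) (auto simp: Suc_diff_le algebra_simps)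
  also have "\<dots> = poly ((fwd_diff h ^^ Suc k) p) x"
    using Suc.IH[of "x + h"] Suc.IH[of x] by simp
  finally show ?case by (simp add: mult.assoc)
qed

lemma pderiv_eq_log_fwd_diff:
  assumes "degree p \<le> Suc N"
  shows "(\<Sum>j\<le>N. (-1) ^ j / of_nat (Suc j) * poly ((fwd_diff h ^^ Suc j) p) y) = h * poly (pderiv p) y"
  using assms
proof (induction p arbitrary: y rule: pCons_induct)
  case 0
  then show ?case by simp
next
  case (pCons a q)
  have deg_q: "degree q \<le> N"
    using pCons.prems by (simp split: if_splits)
  have "(fwd_diff h ^^ Suc N) q = 0"
    by (rule fwd_diff_pow_eq_0) (use deg_q in simp)
  then have alternating: "(\<Sum>j\<le>N. (-1) ^ j * poly ((fwd_diff h ^^ j) q) (y + h)) = poly q y"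
    using sum_telescope[of "\<lambda>j. (-1) ^ j * poly ((fwd_diff h ^^ j) q) y" N] by (simp add: algebra_simps)
  have scale: "(-1) ^ j / of_nat (Suc j) * (of_nat (Suc j) * h * r) = h * ((-1) ^ j * r)" for j r
    by (simp del: of_nat_Suc)
  have "(\<Sum>j\<le>N. (-1) ^ j / of_nat (Suc j) * poly ((fwd_diff h ^^ Suc j) (pCons a q)) y)
      = y * (\<Sum>j\<le>N. (-1) ^ j / of_nat (Suc j) * poly ((fwd_diff h ^^ Suc j) q) y)
        + h * (\<Sum>j\<le>N. (-1) ^ j * poly ((fwd_diff h ^^ j) q) (y + h))"
    unfolding poly_fwd_diff_pow_pCons sum_distrib_left sum.distrib[symmetric]
    by (simp only: distrib_left scale) (simp add: ac_simps)
  also have "\<dots> = h * poly (pderiv (pCons a q)) y"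
    using pCons.IH[of y] deg_q alternating by (simp add: pderiv_pCons algebra_simps)
  finally show ?case .
qed

text \<open>
  gregory h p is the operator log (1 + \<Delta>) / \<Delta> = \<Sum>_j (-1)^j \<Delta>^j / (j + 1) applied to p; the
  series terminates since \<Delta> is nilpotent on polynomials.
\<close>

definition gregory :: "'a::field_char_0 \<Rightarrow> 'a poly \<Rightarrow> 'a poly" where
  "gregory h p = (\<Sum>j\<le>degree p. smult ((-1) ^ j / of_nat (Suc j)) ((fwd_diff h ^^ j) p))"

lemma gregory_eq_sum:
  assumes "degree p \<le> N"
  shows "gregory h p = (\<Sum>j\<le>N. smult ((-1) ^ j / of_nat (Suc j)) ((fwd_diff h ^^ j) p))"
  unfolding gregory_def using assms by (intro sum.mono_neutral_left) (auto simp: fwd_diff_pow_eq_0)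

lemma fwd_diff_gregory: "fwd_diff h (gregory h p) = smult h (pderiv p)"
proof -
  have "poly (fwd_diff h (gregory h p)) y = h * poly (pderiv p) y" for y
    using pderiv_eq_log_fwd_diff[of p "degree p" h y]
    by (simp add: gregory_def poly_sum sum_subtractf[symmetric] right_diff_distrib)
  then show ?thesis by (intro poly_eq_poly_eq_iff[THEN iffD1] ext) simp
qed

lemma gregory_fwd_diff: "gregory h (fwd_diff h p) = smult h (pderiv p)"
proof -
  have "degree (fwd_diff h p) \<le> degree p"
    using degree_fwd_diff[of h p] by linarith
  then have "gregory h (fwd_diff h p)
      = (\<Sum>j\<le>degree p. smult ((-1) ^ j / of_nat (Suc j)) ((fwd_diff h ^^ Suc j) p))"
    by (simp only: gregory_eq_sum funpow_Suc_right o_apply)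
  moreover have "(\<Sum>j\<le>degree p. (-1) ^ j / of_nat (Suc j) * poly ((fwd_diff h ^^ Suc j) p) y)
      = h * poly (pderiv p) y" for y
    by (rule pderiv_eq_log_fwd_diff) simp
  ultimately show ?thesis
    by (intro poly_eq_poly_eq_iff[THEN iffD1] ext) (simp add: poly_sum)
qed

lemma surj_fwd_diff:
  assumes "h \<noteq> 0"
  shows "surj (fwd_diff h)"
  unfolding surj_def
proof
  fix p :: "'a poly"
  obtain P where "pderiv P = p"
    using exists_antiderivative by blast
  with assms have "p = fwd_diff h (smult (1 / h) (gregory h P))"
    by (simp add: fwd_diff_smult fwd_diff_gregory)
  then show "\<exists>q. p = fwd_diff h q" ..
qed

lemma gregory_0_left: "gregory 0 p = p"
proof -
  have "(fwd_diff 0 ^^ Suc j) p = 0" for j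
    by (simp add: fwd_diff_def)
  then show ?thesis
    unfolding gregory_def by (simp add: sum.atMost_shift del: funpow.simps)
qed

lemma gregory_reflect: "poly (gregory (-h) p) (x - h) = poly (gregory h p) x"
proof (cases "h = 0")
  case True
  then show ?thesis by (simp add: gregory_0_left)
next
  case False
  \<comment> \<open>writing p = \<Delta>_h q, both sides become h q'(x)\<close>
  then obtain q where p: "p = fwd_diff h q"
    using surj_fwd_diff by (metis surjD)
  define r where "r = - (q \<circ>\<^sub>p [:h, 1:])"
  have "fwd_diff (-h) r = p"
    unfolding p r_def by (intro poly_eq_poly_eq_iff[THEN iffD1] ext) (simp add: poly_pcompose add.commute)
  then have "poly (gregory (-h) p) (x - h) = - h * poly (pderiv r) (x - h)"
    using gregory_fwd_diff[of "-h" r] by simp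
  also have "\<dots> = h * poly (pderiv q) x"
    by (simp add: r_def pderiv_minus pderiv_pcompose pderiv_pCons poly_pcompose)
  also have "\<dots> = poly (gregory h p) x"
    by (simp add: p gregory_fwd_diff)
  finally show ?thesis .
qed

lemma gregory_summation:
  "h * (\<Sum>i=0..n. poly (pderiv p) (of_nat i * h)) = poly (gregory (-h) p) (of_nat n * h) - poly (gregory h p) 0"
proof -
  have step: "poly (gregory (-h) p) x = poly (gregory (-h) p) (x - h) + h * poly (pderiv p) x" for x
    using arg_cong[OF fwd_diff_gregory[of "-h" p], of "\<lambda>q. poly q x"] by (simp add: algebra_simps)
  show ?thesis
  proof (induction n)
    case 0
    show ?case using step[of 0] gregory_reflect[of h p 0] by simp
  next
    case (Suc n)
    have "of_nat (Suc n) * h - h = of_nat n * h"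
      by (simp add: algebra_simps)
    then show ?case
      using Suc.IH step[of "of_nat (Suc n) * h"] by (simp add: algebra_simps)
  qed
qed

lemma sum_shifts_eq_sum_fwd_diff:
  "(\<Sum>i\<le>m. (\<Sum>k=i..m. of_nat (k choose i) * (-1) ^ (k - i) * b k) * poly f (y + of_nat i * h))
     = (\<Sum>k\<le>m. b k * poly ((fwd_diff h ^^ k) f) y)"
proof -
  have "(\<Sum>k\<le>m. b k * poly ((fwd_diff h ^^ k) f) y)
      = (\<Sum>k\<le>m. \<Sum>i\<le>k. of_nat (k choose i) * (-1) ^ (k - i) * b k * poly f (y + of_nat i * h))"
    by (simp add: poly_fwd_diff_pow_binomial sum_distrib_left mult_ac)
  also have "\<dots> = (\<Sum>i\<le>m. \<Sum>k=i..m. of_nat (k choose i) * (-1) ^ (k - i) * b k * poly f (y + of_nat i * h))"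
    by (rule sum_triangle_swap)
  finally show ?thesis
    by (simp add: sum_distrib_right)
qed

lemma oriented_integral_pderiv: "oriented_integral a b (poly (pderiv P)) = poly P b - poly P a"
proof -
  have "integral {u..v} (poly (pderiv P)) = poly P v - poly P u" if "u \<le> v" for u v
  proof (rule integral_unique, rule fundamental_theorem_of_calculus[OF that])
    show "(poly P has_vector_derivative poly (pderiv P) x) (at x within {u..v})" for x
      using poly_DERIV[of P x]
      by (simp add: has_real_derivative_iff_has_vector_derivative[symmetric] has_field_derivative_at_within)
  qed
  then show ?thesis
    unfolding oriented_integral_def by auto
qed

lemma gregory_end_correction:
  fixes F :: "real poly"
  assumes sys: "solves_system \<alpha> m b" and deg: "degree F \<le> Suc m"
  shows "h * (\<Sum>i=0..m. (\<Sum>k=i..m. real (k choose i) * (-1) ^ (k - i) * b k) * poly (pderiv F) (y + real i * h))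
           = poly (gregory h F) y - poly F (y - \<alpha> * h)"
proof -
  define a where "a s = poly ((fwd_diff h ^^ s) F) y" for s
  define l where "l j = (-1) ^ j / real (Suc j)" for j
  have inner: "h * poly ((fwd_diff h ^^ k) (pderiv F)) y = (\<Sum>j\<le>m - k. l j * a (k + j + 1))" if "k \<le> m" for k
  proof -
    have "degree ((fwd_diff h ^^ k) F) \<le> Suc (m - k)"
      using degree_fwd_diff_pow[where h=h and k=k and p=F] deg that by linarith
    moreover have "(fwd_diff h ^^ Suc j) ((fwd_diff h ^^ k) F) = (fwd_diff h ^^ (k + j + 1)) F" for j
      by (metis Suc_eq_plus1 add.commute add_Suc_right funpow_add o_apply)
    ultimately show ?thesis
      using pderiv_eq_log_fwd_diff[of "(fwd_diff h ^^ k) F" "m - k" h y]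
      by (simp add: pderiv_fwd_diff_pow l_def a_def)
  qed
  have "h * (\<Sum>i=0..m. (\<Sum>k=i..m. real (k choose i) * (-1) ^ (k - i) * b k) * poly (pderiv F) (y + real i * h))
      = (\<Sum>k\<le>m. b k * (h * poly ((fwd_diff h ^^ k) (pderiv F)) y))"
    using sum_shifts_eq_sum_fwd_diff[where m=m and b=b and f="pderiv F" and y=y and h=h]
    by (simp add: atLeast0AtMost sum_distrib_left mult_ac)
  also have "\<dots> = (\<Sum>k\<le>m. \<Sum>j\<le>m - k. b k * l j * a (k + j + 1))"
    by (rule sum.cong) (simp_all add: inner sum_distrib_left mult_ac)
  \<comment> \<open>a Cauchy product of b and l, whose coefficients the system for b prescribes\<close>
  also have "\<dots> = (\<Sum>(k, j)\<in>{(k, j). k + j \<le> m}. b k * l j * a (k + j + 1))"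
  proof -
    have "{(k, j). k + j \<le> m} = Sigma {..m} (\<lambda>k. {..m - k})"
      by auto
    then show ?thesis
      by (simp add: sum.Sigma)
  qed
  also have "\<dots> = (\<Sum>i\<le>m. \<Sum>k\<le>i. b k * l (i - k) * a (Suc i))"
    unfolding sum.triangle_reindex_eq by (intro sum.cong) auto
  also have "\<dots> = (\<Sum>i\<le>m. (l (Suc i) - ((- \<alpha>) gchoose Suc i)) * a (Suc i))"
  proof (rule sum.cong)
    fix i
    assume "i \<in> {..m}"
    then have "(\<Sum>k=0..i. (-1) ^ (i - k) / real (i - k + 1) * b k) = l (Suc i) - ((- \<alpha>) gchoose Suc i)"
      using sys by (simp add: solves_system_def l_def)
    moreover have "(\<Sum>k\<le>i. b k * l (i - k) * a (Suc i))
        = (\<Sum>k=0..i. (-1) ^ (i - k) / real (i - k + 1) * b k) * a (Suc i)"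
      unfolding sum_distrib_right atLeast0AtMost l_def by (rule sum.cong) simp_all
    ultimately show "(\<Sum>k\<le>i. b k * l (i - k) * a (Suc i)) = (l (Suc i) - ((- \<alpha>) gchoose Suc i)) * a (Suc i)"
      by simp
  qed simp
  also have "\<dots> = poly (gregory h F) y - poly F (y - \<alpha> * h)"
  proof -
    have "poly (gregory h F) y = a 0 + (\<Sum>i\<le>m. l (Suc i) * a (Suc i))"
      unfolding gregory_eq_sum[OF deg] sum.atMost_Suc_shift
      by (simp add: poly_sum a_def l_def del: funpow.simps)
    moreover have "poly F (y - \<alpha> * h) = a 0 + (\<Sum>i\<le>m. ((- \<alpha>) gchoose Suc i) * a (Suc i))"
      using newton_forward_difference[OF deg, of y "- \<alpha>" h]
      unfolding sum.atMost_Suc_shift by (simp add: a_def del: funpow.simps)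
    ultimately show ?thesis
      by (simp add: left_diff_distrib sum_subtractf)
  qed
  finally show ?thesis .
qed

theorem mainTheorem1:
  fixes \<alpha> \<beta> :: real and m :: nat and b b' :: "nat \<Rightarrow> real"
  assumes hb: "solves_system \<alpha> m b"
      and hb': "solves_system \<beta> m b'"
  defines "c \<equiv> (\<lambda>i. \<Sum>k=i..m. real (k choose i) * (-1) ^ (k - i) * b k)"
      and "d \<equiv> (\<lambda>i. \<Sum>k=i..m. real (k choose i) * (-1) ^ (k - i) * b' k)"
  shows "\<forall>(n::nat) (h::real) (f::real poly). h > 0 \<longrightarrow> degree f \<le> m \<longrightarrow>
           oriented_integral (- \<alpha> * h) ((real n + \<beta>) * h) (poly f)
           = h * (\<Sum>i=0..n. poly f (real i * h))
             + h * (\<Sum>i=0..m. c i * poly f (real i * h))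
             + h * (\<Sum>i=0..m. d i * poly f ((real n - real i) * h))"
proof (intro allI impI)
  fix n :: nat and h :: real and f :: "real poly"
  assume "h > 0" and "degree f \<le> m"
  \<comment> \<open>the identity holds for every real h\<close>
  then obtain F where F: "pderiv F = f" and deg_F: "degree F \<le> Suc m"
    using exists_antiderivative[of f] by fastforce
  have "oriented_integral (- \<alpha> * h) ((real n + \<beta>) * h) (poly f)
      = poly F ((real n + \<beta>) * h) - poly F (- \<alpha> * h)"
    using oriented_integral_pderiv[of _ _ F] F by simp
  moreover have "h * (\<Sum>i=0..n. poly f (real i * h))
      = poly (gregory (-h) F) (real n * h) - poly (gregory h F) 0"
    using gregory_summation[of h F n] F by simp
  moreover have "h * (\<Sum>i=0..m. c i * poly f (real i * h))
      = poly (gregory h F) 0 - poly F (- \<alpha> * h)"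
    using gregory_end_correction[OF hb deg_F, of h 0] F by (simp add: c_def)
  moreover have "h * (\<Sum>i=0..m. d i * poly f ((real n - real i) * h))
      = poly F ((real n + \<beta>) * h) - poly (gregory (-h) F) (real n * h)"
    using gregory_end_correction[OF hb' deg_F, of "-h" "real n * h"] F by (simp add: d_def algebra_simps)
  ultimately show "oriented_integral (- \<alpha> * h) ((real n + \<beta>) * h) (poly f)
           = h * (\<Sum>i=0..n. poly f (real i * h))
             + h * (\<Sum>i=0..m. c i * poly f (real i * h))
             + h * (\<Sum>i=0..m. d i * poly f ((real n - real i) * h))"
    by linarith
qed

end
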